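(* Suppose the nilpotent subalgebra $N=\mathrm{span}_{\mathbb{C}}\{I_{m+1},\dots,I_n\}$ of $\mathbb{A}_n^m$ is a zero algebra, i.e. $I_rI_s=0$ for all $r,s\in\{m+1,\dots,n\}$. Then for every circle $C$ as described in the context, $\lambda:=\int_C\zeta^{-1}\,d\zeta=2\pi i$ (that is, $2\pi i$ times the unit $1$ of $\mathbb{A}_n^m$).
   Context: Fix natural numbers $m\le n$. $\mathbb{A}_n^m$ is a commutative associative algebra with unit over $\mathbb{C}$ with a basis $\{I_k\}_{k=1}^n$ satisfying: (1) for $r,s\in\{1,\dots,m\}$, $I_rI_s=0$ if $r\ne s$ and $I_rI_r=I_r$; (2) for $r,s\in\{m+1,\dots,n\}$, $I_rI_s=\sum_{k=\max\{r,s\}+1}^{n}\Upsilon^{s}_{r,k}I_k$ with constants $\Upsilon^s_{r,k}\in\mathbb{C}$; (3) for each $s\in\{m+1,\dots,n\}$ there is a unique $u_s\in\{1,\dots,m\}$ such that for $r\in\{1,\dots,m\}$, $I_rI_s=I_s$ if $r=u_s$ and $0$ otherwise. Unit $1=\sum_{u=1}^mI_u$; $\mathbb{A}_n^m=S\oplus_sN$ with $S=\mathrm{span}\{I_1,\dots,I_m\}$ semisimple and $N=\mathrm{span}\{I_{m+1},\dots,I_n\}$ nilpotent. $f_u(\sum_k\lambda_kI_k)=\lambda_u$. Let $e_1=1$, $e_2=\sum_ka_kI_k$, $e_3=\sum_kb_kI_k$ ($a_k,b_k\in\mathbb{C}$) be linearly independent over $\mathbb{R}$; $\zeta=xe_1+ye_2+ze_3$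 ($x,y,z\in\mathbb{R}$), $E_3$ their real span. Standing assumption: $f_u(E_3)=\mathbb{C}$ for all $u=1,\dots,m$. $\zeta$ is non-invertible exactly when $(x,y,z)$ lies on one of the lines $L_u=\{x+y\,\mathrm{Re}\,a_u+z\,\mathrm{Re}\,b_u=0,\ y\,\mathrm{Im}\,a_u+z\,\mathrm{Im}\,b_u=0\}$. The circle: $C\subset E_3$ is $C=\{xe_1+ye_2+ze_3:(x,y,z)\in C'\}$ for a Euclidean circle $C'\subset\mathbb{R}^3$ of radius $R>0$ centered at the origin, such that for every $u=1,\dots,m$ the image $f_u(C)$ is a positively oriented closed Jordan curve in $\mathbb{C}$ bounding a domain containing $0$ (so $C$ avoids $\bigcup_uL_u$). Integral: for a Jordan rectifiable curve $\gamma$ and continuous $\Psi=\sum_k(U_k+iV_k)I_k$ on $\gamma_\zeta$, $\int_{\gamma_\zeta}\Psi d\zeta:=\sum_kI_k\int_\gamma(U_k+iV_k)dx+\sum_ke_2I_k\int_\gamma(U_k+iV_k)dy+\sum_ke_3I_k\int_\gamma(U_k+iV_k)dz$. *)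

theory Defs
  imports "HOL-Complex_Analysis.Complex_Analysis"
begin

text \<open>Elements of the algebra A_n^m are represented by their coordinate functions
  nat \<Rightarrow> complex with respect to the basis I_1, ..., I_n (only coordinates 1..n matter).
  Parameters: m n; structure constants Ups with Ups s r k = Upsilon^s_{r,k}; the map u (u s = u_s).\<close>

definition strc :: "nat \<Rightarrow> nat \<Rightarrow> (nat \<Rightarrow> nat \<Rightarrow> nat \<Rightarrow> complex) \<Rightarrow> (nat \<Rightarrow> nat)
    \<Rightarrow> nat \<Rightarrow> nat \<Rightarrow> nat \<Rightarrow> complex" where
  "strc m n Ups u r s k =
     (if r \<le> m \<and> s \<le> m then (if r = s \<and> k = r then 1 else 0)
      else if r \<le> m \<and> m < s then (if r = u s \<and> k = s then 1 else 0)
      else if m < r \<and> s \<le> m then (if s = u r \<and> k = r then 1 else 0)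
      else (if max r s < k \<and> k \<le> n then Ups s r k else 0))"

definition amul :: "nat \<Rightarrow> nat \<Rightarrow> (nat \<Rightarrow> nat \<Rightarrow> nat \<Rightarrow> complex) \<Rightarrow> (nat \<Rightarrow> nat)
    \<Rightarrow> (nat \<Rightarrow> complex) \<Rightarrow> (nat \<Rightarrow> complex) \<Rightarrow> (nat \<Rightarrow> complex)" where
  "amul m n Ups u x y = (\<lambda>k. if k \<in> {1..n}
      then (\<Sum>r=1..n. \<Sum>s=1..n. x r * y s * strc m n Ups u r s k) else 0)"

definition basisI :: "nat \<Rightarrow> nat \<Rightarrow> complex" where
  "basisI r = (\<lambda>k. if k = r then 1 else 0)"

definition aone :: "nat \<Rightarrow> nat \<Rightarrow> complex" where
  "aone m = (\<lambda>k. if 1 \<le> k \<and> k \<le> m then 1 else 0)"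

definition ainv :: "nat \<Rightarrow> nat \<Rightarrow> (nat \<Rightarrow> nat \<Rightarrow> nat \<Rightarrow> complex) \<Rightarrow> (nat \<Rightarrow> nat)
    \<Rightarrow> (nat \<Rightarrow> complex) \<Rightarrow> (nat \<Rightarrow> complex)" where
  "ainv m n Ups u z = (THE w. (\<forall>k. k \<notin> {1..n} \<longrightarrow> w k = 0) \<and> amul m n Ups u z w = aone m)"

definition zeta :: "nat \<Rightarrow> (nat \<Rightarrow> complex) \<Rightarrow> (nat \<Rightarrow> complex) \<Rightarrow> real^3 \<Rightarrow> (nat \<Rightarrow> complex)" where
  "zeta m e2 e3 v = (\<lambda>k. of_real (v$1) * aone m k + of_real (v$2) * e2 k + of_real (v$3) * e3 k)"

definition circ :: "real \<Rightarrow> real^3 \<Rightarrow> real^3 \<Rightarrow> real \<Rightarrow> real^3" where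
  "circ R p q t = R *\<^sub>R (cos (2*pi*t) *\<^sub>R p + sin (2*pi*t) *\<^sub>R q)"

definition circ' :: "real \<Rightarrow> real^3 \<Rightarrow> real^3 \<Rightarrow> real \<Rightarrow> real^3" where
  "circ' R p q t = (2*pi*R) *\<^sub>R (- sin (2*pi*t) *\<^sub>R p + cos (2*pi*t) *\<^sub>R q)"

definition fpath :: "(nat \<Rightarrow> complex) \<Rightarrow> (nat \<Rightarrow> complex) \<Rightarrow> nat \<Rightarrow> (real \<Rightarrow> real^3) \<Rightarrow> real \<Rightarrow> complex" where
  "fpath a b v g = (\<lambda>t. of_real (g t $ 1) + of_real (g t $ 2) * a v + of_real (g t $ 3) * b v)"

text \<open>The integral over gamma_zeta of Psi d zeta, with gamma parametrised by g on [0,1]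
  with derivative g':  sum_k I_k int Psi_k dx + e2 sum_k I_k int Psi_k dy + e3 sum_k I_k int Psi_k dz.\<close>
definition alg_integral :: "nat \<Rightarrow> nat \<Rightarrow> (nat \<Rightarrow> nat \<Rightarrow> nat \<Rightarrow> complex) \<Rightarrow> (nat \<Rightarrow> nat)
    \<Rightarrow> (nat \<Rightarrow> complex) \<Rightarrow> (nat \<Rightarrow> complex) \<Rightarrow> (real^3 \<Rightarrow> (nat \<Rightarrow> complex))
    \<Rightarrow> (real \<Rightarrow> real^3) \<Rightarrow> (real \<Rightarrow> real^3) \<Rightarrow> (nat \<Rightarrow> complex)" where
  "alg_integral m n Ups u e2 e3 Psi g g' =
    (let X = (\<lambda>k. integral {0..1} (\<lambda>t. Psi (g t) k * of_real (g' t $ 1)));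
         Y = (\<lambda>k. integral {0..1} (\<lambda>t. Psi (g t) k * of_real (g' t $ 2)));
         Z = (\<lambda>k. integral {0..1} (\<lambda>t. Psi (g t) k * of_real (g' t $ 3)))
     in (\<lambda>k. X k + amul m n Ups u e2 Y k + amul m n Ups u e3 Z k))"

end

(* Since N N = 0, an element s + \<nu> with semisimple part s = \<Sum> s_v I_v and nilpotent part \<nu> has
   inverse s^-1 - s^-2 \<nu>, and the integral of \<Psi> d\<zeta> along C is \<integral> \<zeta>'(t) \<Psi>(\<zeta>(t)) dt.
   So the I_v coordinate (v \<le> m) of \<integral> \<zeta>^-1 d\<zeta> is \<integral> \<zeta>_v' / \<zeta>_v dt, i.e. 2\<pi>i times the
   winding number of f_v(C) around 0, which is 2\<pi>i; for k > m the I_k coordinate is the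
   integral of (\<zeta>_k / \<zeta>_(u k))' over a closed curve, which vanishes. *)

theory Submission
  imports Defs
begin

lemma amul_basisI:
  assumes "r \<in> {1..n}" "s \<in> {1..n}" "k \<in> {1..n}"
  shows "amul m n Ups u (basisI r) (basisI s) k = strc m n Ups u r s k"
proof -
  have "amul m n Ups u (basisI r) (basisI s) k
      = (\<Sum>r'=1..n. basisI r r' * (\<Sum>s'=1..n. basisI s s' * strc m n Ups u r' s' k))"
    using assms(3) by (simp add: amul_def sum_distrib_left mult.assoc)
  also have "\<dots> = strc m n Ups u r s k"
    using assms(1,2) by (simp add: basisI_def if_distrib[of "\<lambda>c. c * _"] cong: if_cong)
  finally show ?thesis .
qed

lemma amul_add_left: "amul m n Ups u (\<lambda>j. x j + y j) z k = amul m n Ups u x z k + amul m n Ups u y z k"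
  by (simp add: amul_def algebra_simps sum.distrib)

lemma amul_scale_left: "amul m n Ups u (\<lambda>j. c * x j) z k = c * amul m n Ups u x z k"
  by (simp add: amul_def algebra_simps sum_distrib_left)

lemma amul_aone_left:
  assumes u: "\<forall>s\<in>{m+1..n}. u s \<in> {1..m}" and k: "k \<in> {1..n}"
  shows "amul m n Ups u (aone m) x k = x k"
proof -
  define c where "c = (if k \<le> m then k else u k)"
  \<comment> \<open>I_c is the only idempotent I_r (r \<le> m) with I_r I_k \<noteq> 0\<close>
  have "c \<in> {1..m}"
    using assms by (auto simp: c_def)
  then have c: "c \<in> {1..m}" "c \<le> n"
    using k by (auto simp: c_def split: if_splits)
  have "strc m n Ups u r s k = (if r = c then 1 else 0) * (if s = k then 1 else 0)"
    if "r \<in> {1..m}" "s \<in> {1..n}" for r s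
  proof (cases "s \<le> m")
    case True
    then show ?thesis using that by (auto simp: strc_def c_def)
  next
    case False
    then have "u s \<in> {1..m}" using u that by auto
    then show ?thesis using False that by (auto simp: strc_def c_def)
  qed
  then have "aone m r * strc m n Ups u r s k = (if r = c then 1 else 0) * (if s = k then 1 else 0)"
    if "r \<in> {1..n}" "s \<in> {1..n}" for r s
    using that c by (auto simp: aone_def)
  then have "amul m n Ups u (aone m) x k
      = (\<Sum>r=1..n. \<Sum>s=1..n. (if r = c then 1 else 0) * (if s = k then x s else 0))"
    using k unfolding amul_def by (auto intro!: sum.cong simp: algebra_simps)
  also have "\<dots> = x k"
    using k c by (simp add: sum_distrib_left[symmetric] sum_distrib_right[symmetric])
  finally show ?thesis .
qed

lemma amul_coord_semisimple:
  assumes "m \<le> n" and "k \<in> {1..m}"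
  shows "amul m n Ups u x y k = x k * y k"
proof -
  have "strc m n Ups u r s k = (if r = k then 1 else 0) * (if s = k then 1 else 0)"
    if "r \<in> {1..n}" "s \<in> {1..n}" for r s
    using assms that by (auto simp: strc_def)
  then have "amul m n Ups u x y k = (\<Sum>r=1..n. \<Sum>s=1..n. (if r = k then x r else 0) * (if s = k then y s else 0))"
    using assms unfolding amul_def by (auto intro!: sum.cong)
  also have "\<dots> = x k * y k"
    using assms by (simp add: sum_distrib_left[symmetric] sum_distrib_right[symmetric])
  finally show ?thesis .
qed

lemma strc_eq_0_if_zero_products:
  assumes "\<forall>r\<in>{m+1..n}. \<forall>s\<in>{m+1..n}. amul m n Ups u (basisI r) (basisI s) = (\<lambda>_. 0)"
    and "r \<in> {m+1..n}" "s \<in> {m+1..n}" "k \<in> {1..n}"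
  shows "strc m n Ups u r s k = 0"
  using assms amul_basisI[of r n s k m Ups u] by fastforce

lemma amul_coord_nilpotent:
  assumes zero: "\<forall>r\<in>{m+1..n}. \<forall>s\<in>{m+1..n}. amul m n Ups u (basisI r) (basisI s) = (\<lambda>_. 0)"
    and k: "k \<in> {m+1..n}" and uk: "u k \<in> {1..m}"
  shows "amul m n Ups u x y k = x (u k) * y k + x k * y (u k)"
proof -
  have "strc m n Ups u r s k = (if r = u k then 1 else 0) * (if s = k then 1 else 0)
      + (if r = k then 1 else 0) * (if s = u k then 1 else 0)"
    if "r \<in> {1..n}" "s \<in> {1..n}" for r s
  proof (cases "m < r \<and> m < s")
    case True
    then have "strc m n Ups u r s k = 0"
      using strc_eq_0_if_zero_products[OF zero] that k by simp
    moreover have "r \<noteq> u k" "s \<noteq> u k"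
      using True uk by auto
    ultimately show ?thesis by simp
  next
    case False
    then show ?thesis using k uk by (auto simp: strc_def)
  qed
  moreover have "u k \<in> {1..n}" "u k \<noteq> k"
    using k uk by auto
  ultimately have "amul m n Ups u x y k = (\<Sum>r=1..n. \<Sum>s=1..n. (if r = u k then x r else 0) * (if s = k then y s else 0)
        + (if r = k then x r else 0) * (if s = u k then y s else 0))"
    using k unfolding amul_def by (auto intro!: sum.cong simp: algebra_simps)
  also have "\<dots> = x (u k) * y k + x k * y (u k)"
    using k \<open>u k \<in> {1..n}\<close> by (simp add: sum.distrib sum_distrib_left[symmetric] sum_distrib_right[symmetric])
  finally show ?thesis .
qed

(* (s + \<nu>)^-1 = s^-1 - s^-2 \<nu> when \<nu>^2 = 0; on I_k (k > m) the semisimple part acts through I_(u k). *)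
definition sq_zero_inverse :: "nat \<Rightarrow> nat \<Rightarrow> (nat \<Rightarrow> nat) \<Rightarrow> (nat \<Rightarrow> complex) \<Rightarrow> nat \<Rightarrow> complex" where
  "sq_zero_inverse m n u x k =
     (if k \<in> {1..m} then 1 / x k else if k \<in> {m+1..n} then - x k / (x (u k))\<^sup>2 else 0)"

lemma amul_sq_zero_inverse:
  assumes zero: "\<forall>r\<in>{m+1..n}. \<forall>s\<in>{m+1..n}. amul m n Ups u (basisI r) (basisI s) = (\<lambda>_. 0)"
    and "m \<le> n" and u: "\<forall>s\<in>{m+1..n}. u s \<in> {1..m}"
    and nz: "\<forall>v\<in>{1..m}. x v \<noteq> 0"
  shows "amul m n Ups u x (sq_zero_inverse m n u x) = aone m"
proof
  fix k
  consider "k \<in> {1..m}" | "k \<in> {m+1..n}" | "k \<notin> {1..n}"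
    using \<open>m \<le> n\<close> by force
  then show "amul m n Ups u x (sq_zero_inverse m n u x) k = aone m k"
  proof cases
    case 1
    then show ?thesis
      using amul_coord_semisimple[OF \<open>m \<le> n\<close>] nz by (simp add: sq_zero_inverse_def aone_def)
  next
    case 2
    then have uk: "u k \<in> {1..m}" using u by blast
    then have "u k \<notin> {m+1..n}" by auto
    then show ?thesis using amul_coord_nilpotent[OF zero 2 uk] nz uk 2
      by (simp add: sq_zero_inverse_def aone_def field_simps power2_eq_square)
  next
    case 3
    then show ?thesis using \<open>m \<le> n\<close> by (auto simp: amul_def aone_def)
  qed
qed

lemma sq_zero_inverse_unique:
  assumes zero: "\<forall>r\<in>{m+1..n}. \<forall>s\<in>{m+1..n}. amul m n Ups u (basisI r) (basisI s) = (\<lambda>_. 0)"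
    and "m \<le> n" and u: "\<forall>s\<in>{m+1..n}. u s \<in> {1..m}"
    and nz: "\<forall>v\<in>{1..m}. x v \<noteq> 0"
    and inv: "amul m n Ups u x w = aone m" and supp: "\<forall>k. k \<notin> {1..n} \<longrightarrow> w k = 0"
  shows "w = sq_zero_inverse m n u x"
proof
  have semisimple: "w k = 1 / x k" if k: "k \<in> {1..m}" for k
  proof -
    have "x k * w k = 1"
      using fun_cong[OF inv, of k] amul_coord_semisimple[OF \<open>m \<le> n\<close> k] k by (simp add: aone_def)
    then show ?thesis using nz k by (simp add: field_simps)
  qed
  fix k
  consider "k \<in> {1..m}" | "k \<in> {m+1..n}" | "k \<notin> {1..n}"
    using \<open>m \<le> n\<close> by force
  then show "w k = sq_zero_inverse m n u x k"
  proof cases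
    case 1
    then show ?thesis using semisimple by (simp add: sq_zero_inverse_def)
  next
    case 2
    then have uk: "u k \<in> {1..m}" using u by blast
    have "x (u k) * w k + x k * w (u k) = 0"
      using fun_cong[OF inv, of k] amul_coord_nilpotent[OF zero 2 uk] 2 by (simp add: aone_def)
    then have "w k = - x k * w (u k) / x (u k)"
      using nz uk by (simp add: field_simps add_eq_0_iff)
    then show ?thesis using semisimple[OF uk] nz uk 2
      by (simp add: sq_zero_inverse_def field_simps power2_eq_square)
  next
    case 3
    then show ?thesis using supp \<open>m \<le> n\<close> by (auto simp: sq_zero_inverse_def)
  qed
qed

lemma ainv_eq_sq_zero_inverse:
  assumes zero: "\<forall>r\<in>{m+1..n}. \<forall>s\<in>{m+1..n}. amul m n Ups u (basisI r) (basisI s) = (\<lambda>_. 0)"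
    and "m \<le> n" and u: "\<forall>s\<in>{m+1..n}. u s \<in> {1..m}"
    and nz: "\<forall>v\<in>{1..m}. x v \<noteq> 0"
  shows "ainv m n Ups u x = sq_zero_inverse m n u x"
  unfolding ainv_def
proof (rule the_equality)
  show "(\<forall>k. k \<notin> {1..n} \<longrightarrow> sq_zero_inverse m n u x k = 0)
      \<and> amul m n Ups u x (sq_zero_inverse m n u x) = aone m"
    using amul_sq_zero_inverse[OF assms] \<open>m \<le> n\<close> by (auto simp: sq_zero_inverse_def)
qed (use sq_zero_inverse_unique[OF assms] in blast)

lemma continuous_on_sq_zero_inverse:
  assumes u: "\<forall>s\<in>{m+1..n}. u s \<in> {1..m}"
    and cont: "\<And>j. continuous_on S (\<lambda>t. x t j)"
    and nz: "\<forall>v\<in>{1..m}. \<forall>t\<in>S. x t v \<noteq> 0"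
  shows "continuous_on S (\<lambda>t. sq_zero_inverse m n u (x t) k)"
proof -
  consider "k \<in> {1..m}" | "k \<in> {m+1..n}" "u k \<in> {1..m}" | "k \<notin> {1..m}" "k \<notin> {m+1..n}"
    using u by blast
  then show ?thesis
  proof cases
    case 1
    then show ?thesis using nz
      by (simp add: sq_zero_inverse_def) (intro continuous_intros cont, auto)
  next
    case 2
    then show ?thesis using nz
      by (simp add: sq_zero_inverse_def) (intro continuous_intros cont, auto)
  next
    case 3
    then have "(\<lambda>t. sq_zero_inverse m n u (x t) k) = (\<lambda>t. 0)"
      by (simp add: sq_zero_inverse_def del: atLeastAtMost_iff)
    then show ?thesis by (metis continuous_on_const)
  qed
qed

lemma has_integral_amul_right:
  assumes "\<And>j. j \<in> {1..n} \<Longrightarrow> (\<lambda>t. f t j * c t) integrable_on S"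
  shows "((\<lambda>t. c t * amul m n Ups u x (f t) k) has_integral
           amul m n Ups u x (\<lambda>j. integral S (\<lambda>t. f t j * c t)) k) S"
proof (cases "k \<in> {1..n}")
  case True
  have "((\<lambda>t. \<Sum>r=1..n. \<Sum>s=1..n. x r * (f t s * c t) * strc m n Ups u r s k) has_integral
      (\<Sum>r=1..n. \<Sum>s=1..n. x r * integral S (\<lambda>t. f t s * c t) * strc m n Ups u r s k)) S"
    using assms by (intro has_integral_sum finite_atLeastAtMost has_integral_mult_left has_integral_mult_right
        integrable_integral) auto
  then show ?thesis
    using True by (simp add: amul_def sum_distrib_left algebra_simps)
qed (auto simp: amul_def)

lemma alg_integral_eq_integral_amul:
  fixes g g' :: "real \<Rightarrow> real^3"
  assumes "\<forall>s\<in>{m+1..n}. u s \<in> {1..m}" and k: "k \<in> {1..n}"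
    and int: "\<And>i j. j \<in> {1..n} \<Longrightarrow> (\<lambda>t. Psi (g t) j * of_real (g' t $ i)) integrable_on {0..1}"
  shows "alg_integral m n Ups u a b Psi g g' k
       = integral {0..1} (\<lambda>t. amul m n Ups u (zeta m a b (g' t)) (Psi (g t)) k)"
proof -
  let ?c = "\<lambda>i t. of_real (g' t $ i) :: complex"
  have "((\<lambda>t. Psi (g t) k * ?c 1 t + ?c 2 t * amul m n Ups u a (Psi (g t)) k
        + ?c 3 t * amul m n Ups u b (Psi (g t)) k) has_integral alg_integral m n Ups u a b Psi g g' k) {0..1}"
    unfolding alg_integral_def Let_def
    by (intro has_integral_add has_integral_amul_right integrable_integral int k)
  moreover have "Psi (g t) k * ?c 1 t + ?c 2 t * amul m n Ups u a (Psi (g t)) k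
        + ?c 3 t * amul m n Ups u b (Psi (g t)) k = amul m n Ups u (zeta m a b (g' t)) (Psi (g t)) k" for t
    using amul_aone_left[OF assms(1,2)] by (simp add: zeta_def amul_add_left amul_scale_left)
  ultimately show ?thesis
    by (simp add: integral_unique)
qed

lemma alg_integral_ainv_zeta:
  fixes g g' :: "real \<Rightarrow> real^3"
  assumes zero: "\<forall>r\<in>{m+1..n}. \<forall>s\<in>{m+1..n}. amul m n Ups u (basisI r) (basisI s) = (\<lambda>_. 0)"
    and "m \<le> n" and u: "\<forall>s\<in>{m+1..n}. u s \<in> {1..m}"
    and cont: "\<And>j. continuous_on {0..1} (\<lambda>t. g t $ j)" "\<And>j. continuous_on {0..1} (\<lambda>t. g' t $ j)"
    and nz: "\<forall>v\<in>{1..m}. \<forall>t\<in>{0..1}. zeta m a b (g t) v \<noteq> 0"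
    and k: "k \<in> {1..n}"
  shows "alg_integral m n Ups u a b (\<lambda>w. ainv m n Ups u (zeta m a b w)) g g' k
       = integral {0..1} (\<lambda>t. amul m n Ups u (zeta m a b (g' t)) (sq_zero_inverse m n u (zeta m a b (g t))) k)"
proof -
  have inv: "ainv m n Ups u (zeta m a b (g t)) = sq_zero_inverse m n u (zeta m a b (g t))"
    if "t \<in> {0..1}" for t
    using ainv_eq_sq_zero_inverse[OF zero \<open>m \<le> n\<close> u] nz that by blast
  have "continuous_on {0..1} (\<lambda>t. sq_zero_inverse m n u (zeta m a b (g t)) j * of_real (g' t $ i))" for i j
    using nz unfolding zeta_def by (intro continuous_intros continuous_on_sq_zero_inverse u cont) auto
  then have "(\<lambda>t. ainv m n Ups u (zeta m a b (g t)) j * of_real (g' t $ i)) integrable_on {0..1}" for i j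
    by (intro integrable_eq[OF integrable_continuous_interval]) (auto simp: inv)
  then have "alg_integral m n Ups u a b (\<lambda>w. ainv m n Ups u (zeta m a b w)) g g' k
      = integral {0..1} (\<lambda>t. amul m n Ups u (zeta m a b (g' t)) (ainv m n Ups u (zeta m a b (g t))) k)"
    by (intro alg_integral_eq_integral_amul u k)
  also have "\<dots> = integral {0..1} (\<lambda>t. amul m n Ups u (zeta m a b (g' t)) (sq_zero_inverse m n u (zeta m a b (g t))) k)"
    by (intro integral_cong) (simp add: inv)
  finally show ?thesis .
qed

lemma zeta_has_vector_derivative:
  fixes g g' :: "real \<Rightarrow> real^3"
  assumes "\<And>j. ((\<lambda>t. g t $ j) has_real_derivative g' t $ j) (at t)"
  shows "((\<lambda>t. zeta m a b (g t) k) has_vector_derivative zeta m a b (g' t) k) (at t)"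
  unfolding zeta_def
  by (intro has_vector_derivative_add has_vector_derivative_mult_left has_vector_derivative_of_real assms)

lemma integral_logderiv_eq_winding_number:
  fixes h h' :: "real \<Rightarrow> complex"
  assumes deriv: "\<And>t. t \<in> {0..1} \<Longrightarrow> (h has_vector_derivative h' t) (at t)"
    and "continuous_on {0..1} h'" and nz: "\<forall>t\<in>{0..1}. h t \<noteq> 0"
  shows "integral {0..1} (\<lambda>t. h' t / h t) = 2 * pi * \<i> * winding_number h 0"
proof -
  have "valid_path h"
    unfolding valid_path_def using assms
    by (intro C1_differentiable_imp_piecewise) (auto simp: C1_differentiable_on_def intro!: exI[of _ h'])
  moreover have "0 \<notin> path_image h"
    using nz by (auto simp: path_image_def)
  ultimately have "winding_number h 0 = contour_integral h (\<lambda>w. 1 / w) / (2 * pi * \<i>)"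
    by (simp add: winding_number_valid_path)
  moreover have "contour_integral h (\<lambda>w. 1 / w) = integral {0..1} (\<lambda>t. h' t / h t)"
    unfolding contour_integral_integral
    by (intro integral_cong) (simp add: vector_derivative_at[OF deriv])
  ultimately show ?thesis by simp
qed

lemma integral_quotient_derivative_eq_0:
  fixes f f' g g' :: "real \<Rightarrow> complex"
  assumes df: "\<And>t. t \<in> {0..1} \<Longrightarrow> (f has_vector_derivative f' t) (at t)"
    and dg: "\<And>t. t \<in> {0..1} \<Longrightarrow> (g has_vector_derivative g' t) (at t)"
    and nz: "\<forall>t\<in>{0..1}. g t \<noteq> 0" and "f 1 = f 0" and "g 1 = g 0"
  shows "integral {0..1} (\<lambda>t. f' t / g t - f t * g' t / (g t)\<^sup>2) = 0"
proof -
  have "((\<lambda>t. f t * inverse (g t)) has_vector_derivative f' t / g t - f t * g' t / (g t)\<^sup>2) (at t within {0..1})"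
    if t: "t \<in> {0..1}" for t
  proof -
    have "((\<lambda>t. inverse (g t)) has_vector_derivative - (g' t * (inverse (g t))\<^sup>2)) (at t)"
      using field_vector_diff_chain_at[OF dg[OF t] DERIV_inverse] nz t by (simp add: o_def numeral_2_eq_2)
    note has_vector_derivative_mult[OF df[OF t] this]
    moreover have "f t * - (g' t * (inverse (g t))\<^sup>2) + f' t * inverse (g t)
        = f' t / g t - f t * g' t / (g t)\<^sup>2"
      by (simp add: field_simps power2_eq_square)
    ultimately show ?thesis
      by (metis has_vector_derivative_at_within)
  qed
  then have "((\<lambda>t. f' t / g t - f t * g' t / (g t)\<^sup>2) has_integral f 1 * inverse (g 1) - f 0 * inverse (g 0)) {0..1}"
    by (intro fundamental_theorem_of_calculus) auto
  then show ?thesis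
    using assms(4,5) by (simp add: integral_unique)
qed

lemma integral_dzeta_sq_zero_inverse:
  fixes g g' :: "real \<Rightarrow> real^3"
  assumes zero: "\<forall>r\<in>{m+1..n}. \<forall>s\<in>{m+1..n}. amul m n Ups u (basisI r) (basisI s) = (\<lambda>_. 0)"
    and "m \<le> n" and u: "\<forall>s\<in>{m+1..n}. u s \<in> {1..m}"
    and deriv: "\<And>j t. ((\<lambda>t. g t $ j) has_real_derivative g' t $ j) (at t)"
    and cont: "\<And>j. continuous_on {0..1} (\<lambda>t. g' t $ j)"
    and closed: "g 1 = g 0"
    and nz: "\<forall>v\<in>{1..m}. \<forall>t\<in>{0..1}. zeta m a b (g t) v \<noteq> 0"
    and wind: "\<forall>v\<in>{1..m}. winding_number (\<lambda>t. zeta m a b (g t) v) 0 = 1"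
    and k: "k \<in> {1..n}"
  shows "integral {0..1} (\<lambda>t. amul m n Ups u (zeta m a b (g' t)) (sq_zero_inverse m n u (zeta m a b (g t))) k)
       = 2 * pi * \<i> * aone m k"
proof -
  let ?z = "\<lambda>v t. zeta m a b (g t) v" and ?z' = "\<lambda>v t. zeta m a b (g' t) v"
  have dz: "\<And>v t. ((?z v) has_vector_derivative ?z' v t) (at t)"
    by (rule zeta_has_vector_derivative[OF deriv])
  consider "k \<in> {1..m}" | "k \<in> {m+1..n}"
    using k by force
  then show ?thesis
  proof cases
    case 1
    have "integral {0..1} (\<lambda>t. amul m n Ups u (zeta m a b (g' t)) (sq_zero_inverse m n u (zeta m a b (g t))) k)
        = integral {0..1} (\<lambda>t. ?z' k t / ?z k t)"
      using amul_coord_semisimple[OF \<open>m \<le> n\<close> 1] 1 by (simp add: sq_zero_inverse_def)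
    also have "\<dots> = 2 * pi * \<i> * winding_number (?z k) 0"
      using 1 nz by (intro integral_logderiv_eq_winding_number dz)
        (auto simp: zeta_def intro!: continuous_intros cont)
    finally show ?thesis
      using wind 1 by (simp add: aone_def)
  next
    case 2
    then have uk: "u k \<in> {1..m}" using u by blast
    then have "u k \<notin> {m+1..n}" by auto
    then have "integral {0..1} (\<lambda>t. amul m n Ups u (zeta m a b (g' t)) (sq_zero_inverse m n u (zeta m a b (g t))) k)
        = integral {0..1} (\<lambda>t. ?z' k t / ?z (u k) t - ?z k t * ?z' (u k) t / (?z (u k) t)\<^sup>2)"
      using amul_coord_nilpotent[OF zero 2 uk] 2 uk by (simp add: sq_zero_inverse_def mult.commute)
    also have "\<dots> = 0"
      using nz uk closed by (intro integral_quotient_derivative_eq_0 dz) auto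
    finally show ?thesis
      using 2 by (simp add: aone_def)
  qed
qed

lemma fpath_eq_zeta:
  assumes "v \<in> {1..m}"
  shows "fpath a b v g = (\<lambda>t. zeta m a b (g t) v)"
  using assms by (auto simp: fpath_def zeta_def aone_def)

lemma zeta_nonzero_if_inside:
  assumes "v \<in> {1..m}" and "0 \<in> inside (path_image (fpath a b v g))" and "t \<in> {0..1}"
  shows "zeta m a b (g t) v \<noteq> 0"
proof
  assume "zeta m a b (g t) v = 0"
  then have "0 \<in> path_image (fpath a b v g)"
    using assms by (metis fpath_eq_zeta image_eqI path_image_def)
  then show False
    using assms(2) inside_no_overlap by blast
qed

lemma circ_has_real_derivative: "((\<lambda>t. circ R p q t $ j) has_real_derivative circ' R p q t $ j) (at t)"
  unfolding circ_def circ'_def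
  by (auto intro!: derivative_eq_intros simp: algebra_simps)

lemma continuous_on_circ: "continuous_on S (\<lambda>t. circ R p q t $ j)"
  unfolding circ_def by (intro continuous_intros)

lemma continuous_on_circ': "continuous_on S (\<lambda>t. circ' R p q t $ j)"
  unfolding circ'_def by (intro continuous_intros)

theorem theorem6:
  fixes m n :: nat and Ups :: "nat \<Rightarrow> nat \<Rightarrow> nat \<Rightarrow> complex" and u :: "nat \<Rightarrow> nat"
    and a b :: "nat \<Rightarrow> complex" and R :: real and p q :: "real^3"
  assumes "1 \<le> m" and "m \<le> n"
    and "\<forall>s\<in>{m+1..n}. u s \<in> {1..m}"
    and "\<forall>x y. amul m n Ups u x y = amul m n Ups u y x"
    and "\<forall>x y z. amul m n Ups u (amul m n Ups u x y) z = amul m n Ups u x (amul m n Ups u y z)"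
    and zero_alg: "\<forall>r\<in>{m+1..n}. \<forall>s\<in>{m+1..n}. amul m n Ups u (basisI r) (basisI s) = (\<lambda>_. 0)"
    and indep: "\<forall>x y z :: real. (\<forall>k\<in>{1..n}. of_real x * aone m k + of_real y * a k + of_real z * b k = 0)
                  \<longrightarrow> x = 0 \<and> y = 0 \<and> z = 0"
    and onto: "\<forall>v\<in>{1..m}. range (\<lambda>(x::real, y::real, z::real). of_real x + of_real y * a v + of_real z * b v) = UNIV"
    and "R > 0" and "p \<bullet> p = 1" and "q \<bullet> q = 1" and "p \<bullet> q = 0"
    and jordan: "\<forall>v\<in>{1..m}. simple_path (fpath a b v (circ R p q))
                   \<and> pathfinish (fpath a b v (circ R p q)) = pathstart (fpath a b v (circ R p q))
                   \<and> 0 \<in> inside (path_image (fpath a b v (circ R p q)))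
                   \<and> winding_number (fpath a b v (circ R p q)) 0 = 1"
  shows "\<forall>k\<in>{1..n}. alg_integral m n Ups u a b (\<lambda>w. ainv m n Ups u (zeta m a b w)) (circ R p q) (circ' R p q) k
           = 2 * of_real pi * \<i> * aone m k"
proof -
  have nz: "\<forall>v\<in>{1..m}. \<forall>t\<in>{0..1}. zeta m a b (circ R p q t) v \<noteq> 0"
    using jordan zeta_nonzero_if_inside by blast
  have wind: "\<forall>v\<in>{1..m}. winding_number (\<lambda>t. zeta m a b (circ R p q t) v) 0 = 1"
    using jordan fpath_eq_zeta by metis
  show ?thesis
  proof (intro ballI)
    fix k assume k: "k \<in> {1..n}"
    have "alg_integral m n Ups u a b (\<lambda>w. ainv m n Ups u (zeta m a b w)) (circ R p q) (circ' R p q) k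
        = integral {0..1} (\<lambda>t. amul m n Ups u (zeta m a b (circ' R p q t))
            (sq_zero_inverse m n u (zeta m a b (circ R p q t))) k)"
      using nz k by (intro alg_integral_ainv_zeta zero_alg assms(2,3) continuous_on_circ continuous_on_circ')
    also have "\<dots> = 2 * pi * \<i> * aone m k"
      using circ_has_real_derivative continuous_on_circ' nz wind k
      by (intro integral_dzeta_sq_zero_inverse[OF zero_alg assms(2,3)]) (auto simp: circ_def)
    finally show "alg_integral m n Ups u a b (\<lambda>w. ainv m n Ups u (zeta m a b w)) (circ R p q) (circ' R p q) k
        = 2 * of_real pi * \<i> * aone m k"
      by simp
  qed
qed

end
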